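(* Let $\Delta(x,\hat x)=(x-\hat x)^2$ and $\phi(p_X,p_{\hat X})=W_2^2(p_X,p_{\hat X})$, $\mu_X\in\mathbb R$, $\sigma_X>0$, $R,R_c\ge0$, $P\ge0$. Then $$D(R,R_c,P|\mathcal N(\mu_X,\sigma_X^2))=\inf_{p_{\hat X}} D(R,R_c|\mathcal N(\mu_X,\sigma_X^2),p_{\hat X})$$ where the infimum is over distributions $p_{\hat X}$ on $\mathbb R$ with finite second moment satisfying $\mu_{\hat X}=\mu_X$, $\sigma_{\hat X}\le\sigma_X$, and $W_2^2(\mathcal N(\mu_X,\sigma_X^2),p_{\hat X})\le P$.
   Context: All logarithms are natural; $\mu_{\hat X},\sigma_{\hat X}^2$ are the mean and variance of $\hat X\sim p_{\hat X}$. $W_2^2(p,q):=\inf_{\pi\in\Pi(p,q)}\mathbb E_\pi[(A-B)^2]$, where $\Pi(p,q)$ is the set of couplings of $p$ and $q$. For a block length $n\ge1$, a code consists of finite sets $\mathcal J,\mathcal K$, a random seed $K$ uniform on $\mathcal K$ and independent of the source sequence $X^n=(X_1,\dots,X_n)$ (i.i.d. with marginal $p_X$), a stochastic encoder $p_{J|X^nK}$ producing $J\in\mathcal J$, and a stochastic decoder $p_{\hat X^n|JK}$ producing $\hat X^n\in\mathbb R^n$. $D(R,R_c|p_X,p_{\hat X})$: $D$ is achievable with respect to $p_{\hat X}$ subject to $(R,R_c)$ if for some $n$ there is such a code with $\frac1n\log|\mathcal J|\le R$, $\frac1n\log|\mathcal K|\le R_c$, $\frac1n\sum_t\mathbb E[\Delta(X_t,\hat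 X_t)]\le D$, and $\hat X_1,\dots,\hat X_n$ i.i.d. with marginal $p_{\hat X}$; $D(R,R_c|p_X,p_{\hat X})$ is the infimum of achievable $D$. $D(R,R_c,P|p_X)$: $D$ is achievable subject to $(R,R_c)$ and perception constraint $P$ if for some $n$ there is such a code with the same rate and distortion constraints, $\frac1n\sum_t\phi(p_{X_t},p_{\hat X_t})\le P$, and $\hat X_1,\dots,\hat X_n$ i.i.d. (with some marginal); $D(R,R_c,P|p_X)$ is the infimum of achievable $D$. *)

theory Defs
  imports "HOL-Probability.Probability"
begin

text \<open>Gaussian source law N(mu, sigma^2) (sigma = standard deviation).\<close>
definition gauss :: "real \<Rightarrow> real \<Rightarrow> real measure" where
  "gauss \<mu> \<sigma> = density lborel (normal_density \<mu> \<sigma>)"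

definition couplings :: "real measure \<Rightarrow> real measure \<Rightarrow> (real \<times> real) measure set" where
  "couplings p q = {\<pi>. prob_space \<pi> \<and> sets \<pi> = sets (borel :: (real \<times> real) measure)
      \<and> distr \<pi> borel fst = p \<and> distr \<pi> borel snd = q}"

definition W2sq :: "real measure \<Rightarrow> real measure \<Rightarrow> ennreal" where
  "W2sq p q = (INF \<pi> \<in> couplings p q. \<integral>\<^sup>+ z. ennreal ((fst z - snd z)\<^sup>2) \<partial>\<pi>)"

definition real_law :: "real measure \<Rightarrow> bool" where
  "real_law q \<longleftrightarrow> prob_space q \<and> sets q = sets (borel :: real measure)"

definition mean :: "real measure \<Rightarrow> real" where
  "mean q = (\<integral> x. x \<partial>q)"

definition std_dev :: "real measure \<Rightarrow> real" where
  "std_dev q = sqrt (\<integral> x. (x - mean q)\<^sup>2 \<partial>q)"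

text \<open>J = {..<M}, K = {..<L}; the seed is uniform on K and independent of X^n.
  enc x k j = p_{J|X^n K}(j | x, k);  dec j k = law of \<hat>X^n given (J,K) = (j,k).\<close>
definition is_code :: "nat \<Rightarrow> nat \<Rightarrow> nat \<Rightarrow> ((nat \<Rightarrow> real) \<Rightarrow> nat \<Rightarrow> nat \<Rightarrow> real)
    \<Rightarrow> (nat \<Rightarrow> nat \<Rightarrow> (nat \<Rightarrow> real) measure) \<Rightarrow> bool" where
  "is_code n M L enc dec \<longleftrightarrow> n \<ge> 1 \<and> M \<ge> 1 \<and> L \<ge> 1
     \<and> (\<forall>x k j. 0 \<le> enc x k j)
     \<and> (\<forall>x k. k < L \<longrightarrow> (\<Sum>j<M. enc x k j) = 1)
     \<and> (\<forall>k j. (\<lambda>x. enc x k j) \<in> borel_measurable (PiM {..<n} (\<lambda>_. borel)))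
     \<and> (\<forall>j<M. \<forall>k<L. prob_space (dec j k)
            \<and> sets (dec j k) = sets (PiM {..<n} (\<lambda>_. (borel :: real measure))))"

definition src :: "real measure \<Rightarrow> nat \<Rightarrow> (nat \<Rightarrow> real) measure" where
  "src pX n = PiM {..<n} (\<lambda>_. pX)"

definition recon_prob :: "real measure \<Rightarrow> nat \<Rightarrow> nat \<Rightarrow> nat \<Rightarrow> ((nat \<Rightarrow> real) \<Rightarrow> nat \<Rightarrow> nat \<Rightarrow> real)
    \<Rightarrow> (nat \<Rightarrow> nat \<Rightarrow> (nat \<Rightarrow> real) measure) \<Rightarrow> (nat \<Rightarrow> real) set \<Rightarrow> real" where
  "recon_prob pX n M L enc dec A =
     (\<Sum>k<L. \<Sum>j<M. (1 / real L) * (\<integral> x. enc x k j \<partial>src pX n) * measure (dec j k) A)"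

definition avg_distortion :: "real measure \<Rightarrow> nat \<Rightarrow> nat \<Rightarrow> nat \<Rightarrow> ((nat \<Rightarrow> real) \<Rightarrow> nat \<Rightarrow> nat \<Rightarrow> real)
    \<Rightarrow> (nat \<Rightarrow> nat \<Rightarrow> (nat \<Rightarrow> real) measure) \<Rightarrow> ennreal" where
  "avg_distortion pX n M L enc dec =
     ennreal (1 / real n) * (\<Sum>t<n. \<Sum>k<L. \<Sum>j<M. ennreal (1 / real L) *
        (\<integral>\<^sup>+ x. ennreal (enc x k j) * (\<integral>\<^sup>+ y. ennreal ((x t - y t)\<^sup>2) \<partial>dec j k) \<partial>src pX n))"

definition recon_iid :: "real measure \<Rightarrow> nat \<Rightarrow> nat \<Rightarrow> nat \<Rightarrow> ((nat \<Rightarrow> real) \<Rightarrow> nat \<Rightarrow> nat \<Rightarrow> real)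
    \<Rightarrow> (nat \<Rightarrow> nat \<Rightarrow> (nat \<Rightarrow> real) measure) \<Rightarrow> real measure \<Rightarrow> bool" where
  "recon_iid pX n M L enc dec q \<longleftrightarrow>
     (\<forall>A \<in> sets (PiM {..<n} (\<lambda>_. (borel :: real measure))).
        recon_prob pX n M L enc dec A = measure (PiM {..<n} (\<lambda>_. q)) A)"

definition D_marg :: "real \<Rightarrow> real \<Rightarrow> real measure \<Rightarrow> real measure \<Rightarrow> ennreal" where
  "D_marg R Rc pX q = Inf {D. \<exists>n M L enc dec. is_code n M L enc dec
      \<and> ln (real M) / real n \<le> R \<and> ln (real L) / real n \<le> Rc
      \<and> avg_distortion pX n M L enc dec \<le> D
      \<and> recon_iid pX n M L enc dec q}"

text \<open>D(R,R_c,P | p_X) (squared-error distortion, perception measure W_2^2).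
  Since \<hat>X_t has marginal q for every t, p_{\<hat>X_t} = q and p_{X_t} = p_X.\<close>
definition D_perc :: "real \<Rightarrow> real \<Rightarrow> real \<Rightarrow> real measure \<Rightarrow> ennreal" where
  "D_perc R Rc P pX = Inf {D. \<exists>n M L enc dec q. is_code n M L enc dec
      \<and> ln (real M) / real n \<le> R \<and> ln (real L) / real n \<le> Rc
      \<and> avg_distortion pX n M L enc dec \<le> D
      \<and> real_law q \<and> recon_iid pX n M L enc dec q
      \<and> ennreal (1 / real n) * (\<Sum>t<n. W2sq pX q) \<le> ennreal P}"

end

theory Submission
  imports Defs
begin

text \<open>Both sides describe codes whose reconstructions are i.i.d.; the only difference is the constraint on
  their marginal q.  Any q admissible on the right is admissible on the left, since the perception
  constraint then reads W2sq(N, q) \<le> P, N = N(\<mu>, \<sigma>^2).  Conversely, given a code with i.i.d.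
  marginal q and W2sq(N, q) \<le> P (so q has a finite second moment), apply letterwise the affine map T y = \<mu> + c (y - mean q) with
  c = min 1 (\<sigma> / std_dev q) to the decoder output.  The new marginal T(q) has mean \<mu> and standard
  deviation at most \<sigma>, and T does not increase E (X - Y)^2 for any pair with X \<sim> N(\<mu>, \<sigma>^2) and
  Y \<sim> q: pointwise (a - T b)^2 \<le> (a - b)^2 + H a + K b, where H and K are quadratics with
  E H(X) + E K(Y) = (1 - c) s (\<sigma> - s) - (\<mu> - m)^2 \<le> 0 for m = mean q and s = std_dev q.
  Applied to couplings this shows W2sq(N, T(q)) \<le> W2sq(N, q); applied to the joint law of a source
  letter and its reconstruction it shows that the distortion does not increase.\<close>

section \<open>Gaussian moments\<close>

lemma prob_space_gauss: "0 < \<sigma> \<Longrightarrow> prob_space (gauss \<mu> \<sigma>)"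
  unfolding gauss_def by (rule prob_space_normal_density)

lemma sets_gauss [simp, measurable_cong]: "sets (gauss \<mu> \<sigma>) = sets borel"
  unfolding gauss_def by simp

lemma real_law_gauss: "0 < \<sigma> \<Longrightarrow> real_law (gauss \<mu> \<sigma>)"
  by (simp add: real_law_def prob_space_gauss)

lemma integrable_gauss_centered_power:
  "0 < \<sigma> \<Longrightarrow> integrable (gauss \<mu> \<sigma>) (\<lambda>x. (x - \<mu>) ^ k)"
  unfolding gauss_def by (subst integrable_density) (auto simp: integrable_normal_moment)

lemma integral_gauss_centered:
  assumes "0 < \<sigma>" shows "(\<integral>x. (x - \<mu>) \<partial>gauss \<mu> \<sigma>) = 0"
  unfolding gauss_def using integral_normal_moment_odd[OF assms, of \<mu> 0]
  by (subst integral_density) auto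

lemma integral_gauss_centered_square:
  assumes "0 < \<sigma>" shows "(\<integral>x. (x - \<mu>)\<^sup>2 \<partial>gauss \<mu> \<sigma>) = \<sigma>\<^sup>2"
  unfolding gauss_def using integral_normal_moment_even[OF assms, of \<mu> 1]
  by (subst integral_density) (auto simp: power2_eq_square)

lemma integrable_gauss_square:
  assumes "0 < \<sigma>" shows "integrable (gauss \<mu> \<sigma>) (\<lambda>x. x\<^sup>2)"
proof -
  interpret prob_space "gauss \<mu> \<sigma>" by (rule prob_space_gauss[OF assms])
  have e: "(\<lambda>x. x\<^sup>2) = (\<lambda>x::real. (x - \<mu>)\<^sup>2 + 2 * \<mu> * (x - \<mu>) + \<mu>\<^sup>2)"
    by (auto simp: power2_eq_square algebra_simps)
  show ?thesis unfolding e
    using integrable_gauss_centered_power[OF assms, of \<mu> 2] integrable_gauss_centered_power[OF assms, of \<mu> 1]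
    by auto
qed

section \<open>Laws with finite second moment\<close>

lemma std_dev_nonneg: "0 \<le> std_dev q"
  unfolding std_dev_def by (auto intro: Bochner_Integration.integral_nonneg)

lemma real_law_measurable_iff:
  assumes "real_law q" shows "f \<in> borel_measurable q \<longleftrightarrow> f \<in> borel_measurable borel"
proof -
  have "sets q = sets borel" using assms by (simp add: real_law_def)
  then show ?thesis by (subst measurable_cong_sets[OF _ refl]) auto
qed

context
  fixes q :: "real measure"
  assumes law: "real_law q" and square_integrable: "integrable q (\<lambda>x. x\<^sup>2)"
begin

interpretation prob_space q
  using law by (simp add: real_law_def)

lemma real_law_integrable_id: "integrable q (\<lambda>x. x)"
  using law by (intro square_integrable_imp_integrable[OF _ square_integrable])
    (simp add: real_law_measurable_iff)

lemma real_law_integrable_shifted_square: "integrable q (\<lambda>x. (x - c)\<^sup>2)"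
proof -
  have e: "(\<lambda>x. (x - c)\<^sup>2) = (\<lambda>x. x\<^sup>2 - 2 * c * x + c\<^sup>2)"
    by (auto simp: power2_eq_square algebra_simps)
  show ?thesis unfolding e using real_law_integrable_id square_integrable by auto
qed

lemma real_law_integral_centered: "(\<integral>x. (x - mean q) \<partial>q) = 0"
  using real_law_integrable_id by (simp add: mean_def prob_space)

lemma real_law_integral_centered_square: "(\<integral>x. (x - mean q)\<^sup>2 \<partial>q) = (std_dev q)\<^sup>2"
proof -
  have "0 \<le> (\<integral>x. (x - mean q)\<^sup>2 \<partial>q)" by (rule Bochner_Integration.integral_nonneg) auto
  then show ?thesis by (simp add: std_dev_def)
qed

end

section \<open>Joint expectation functionals\<close>

text \<open>The nonnegative expectation g \<mapsto> E g(X, Y) of a pair with X \<sim> p and Y \<sim> q, reduced to the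
  properties the shrinking argument uses.  It is realised both by couplings and by the joint law of a
  source letter and its reconstruction under a code.\<close>
definition joint_functional ::
    "((real \<Rightarrow> real \<Rightarrow> ennreal) \<Rightarrow> ennreal) \<Rightarrow> real measure \<Rightarrow> real measure \<Rightarrow> bool" where
  "joint_functional \<Phi> p q \<longleftrightarrow>
     (\<forall>g h. (\<lambda>(a, b). g a b) \<in> borel_measurable (borel \<Otimes>\<^sub>M borel) \<longrightarrow>
            (\<lambda>(a, b). h a b) \<in> borel_measurable (borel \<Otimes>\<^sub>M borel) \<longrightarrow>
            \<Phi> (\<lambda>a b. g a b + h a b) = \<Phi> g + \<Phi> h)
   \<and> (\<forall>g h. (\<forall>a b. g a b \<le> h a b) \<longrightarrow> \<Phi> g \<le> \<Phi> h)
   \<and> (\<forall>h \<in> borel_measurable borel. \<Phi> (\<lambda>a b. h a) = (\<integral>\<^sup>+a. h a \<partial>p))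
   \<and> (\<forall>h \<in> borel_measurable borel. \<Phi> (\<lambda>a b. h b) = (\<integral>\<^sup>+b. h b \<partial>q))"

lemma joint_functionalI:
  assumes "\<And>g h. (\<lambda>(a, b). g a b) \<in> borel_measurable (borel \<Otimes>\<^sub>M borel) \<Longrightarrow>
      (\<lambda>(a, b). h a b) \<in> borel_measurable (borel \<Otimes>\<^sub>M borel) \<Longrightarrow> \<Phi> (\<lambda>a b. g a b + h a b) = \<Phi> g + \<Phi> h"
    and "\<And>g h. (\<And>a b. g a b \<le> h a b) \<Longrightarrow> \<Phi> g \<le> \<Phi> h"
    and "\<And>h. h \<in> borel_measurable borel \<Longrightarrow> \<Phi> (\<lambda>a b. h a) = (\<integral>\<^sup>+a. h a \<partial>p)"
    and "\<And>h. h \<in> borel_measurable borel \<Longrightarrow> \<Phi> (\<lambda>a b. h b) = (\<integral>\<^sup>+b. h b \<partial>q)"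
  shows "joint_functional \<Phi> p q"
  using assms unfolding joint_functional_def by blast

lemma joint_functional_add:
  "joint_functional \<Phi> p q \<Longrightarrow> (\<lambda>(a, b). g a b) \<in> borel_measurable (borel \<Otimes>\<^sub>M borel) \<Longrightarrow>
    (\<lambda>(a, b). h a b) \<in> borel_measurable (borel \<Otimes>\<^sub>M borel) \<Longrightarrow> \<Phi> (\<lambda>a b. g a b + h a b) = \<Phi> g + \<Phi> h"
  unfolding joint_functional_def by blast

lemma joint_functional_mono: "joint_functional \<Phi> p q \<Longrightarrow> (\<And>a b. g a b \<le> h a b) \<Longrightarrow> \<Phi> g \<le> \<Phi> h"
  unfolding joint_functional_def by blast

lemma joint_functional_fst:
  "joint_functional \<Phi> p q \<Longrightarrow> h \<in> borel_measurable borel \<Longrightarrow> \<Phi> (\<lambda>a b. h a) = (\<integral>\<^sup>+a. h a \<partial>p)"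
  unfolding joint_functional_def by blast

lemma joint_functional_snd:
  "joint_functional \<Phi> p q \<Longrightarrow> h \<in> borel_measurable borel \<Longrightarrow> \<Phi> (\<lambda>a b. h b) = (\<integral>\<^sup>+b. h b \<partial>q)"
  unfolding joint_functional_def by blast

lemma integral_eq_pos_part_minus_neg_part:
  fixes f :: "'a \<Rightarrow> real"
  assumes "integrable M f"
  shows "(\<integral>x. f x \<partial>M) = (\<integral>x. max 0 (f x) \<partial>M) - (\<integral>x. max 0 (- f x) \<partial>M)"
proof -
  have "(\<integral>x. max 0 (f x) \<partial>M) - (\<integral>x. max 0 (- f x) \<partial>M) = (\<integral>x. max 0 (f x) - max 0 (- f x) \<partial>M)"
    using assms by (intro Bochner_Integration.integral_diff[symmetric]) auto
  also have "\<dots> = (\<integral>x. f x \<partial>M)"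
    by (rule Bochner_Integration.integral_cong) (auto simp: max_def)
  finally show ?thesis by simp
qed

text \<open>In ennreal the correction terms H and K are split into positive and negative parts, which are
  then cancelled.\<close>
lemma joint_functional_le_by_correction:
  fixes f g :: "real \<Rightarrow> real \<Rightarrow> real" and H K :: "real \<Rightarrow> real"
  assumes \<Phi>: "joint_functional \<Phi> p q"
    and f: "(\<lambda>(a, b). f a b) \<in> borel_measurable (borel \<Otimes>\<^sub>M borel)"
    and g: "(\<lambda>(a, b). g a b) \<in> borel_measurable (borel \<Otimes>\<^sub>M borel)"
    and H [measurable]: "H \<in> borel_measurable borel" and K [measurable]: "K \<in> borel_measurable borel"
    and integrable: "integrable p H" "integrable q K"
    and nonneg: "\<And>a b. 0 \<le> f a b" "\<And>a b. 0 \<le> g a b"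
    and pointwise: "\<And>a b. f a b \<le> g a b + H a + K b"
    and balance: "(\<integral>x. H x \<partial>p) + (\<integral>y. K y \<partial>q) \<le> 0"
  shows "\<Phi> (\<lambda>a b. ennreal (f a b)) \<le> \<Phi> (\<lambda>a b. ennreal (g a b))"
proof -
  define Hp Hn Kp Kn where "Hp x = max 0 (H x)" and "Hn x = max 0 (- H x)"
    and "Kp x = max 0 (K x)" and "Kn x = max 0 (- K x)" for x
  have [measurable]: "Hp \<in> borel_measurable borel" "Hn \<in> borel_measurable borel"
      "Kp \<in> borel_measurable borel" "Kn \<in> borel_measurable borel"
    unfolding Hp_def Hn_def Kp_def Kn_def by measurable
  have [measurable]: "(\<lambda>(a, b). ennreal (f a b)) \<in> borel_measurable (borel \<Otimes>\<^sub>M borel)"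
      "(\<lambda>(a, b). ennreal (g a b)) \<in> borel_measurable (borel \<Otimes>\<^sub>M borel)"
    using f g by (simp_all add: case_prod_beta')
  have parts_nonneg: "0 \<le> Hp x" "0 \<le> Hn x" "0 \<le> Kp x" "0 \<le> Kn x" for x
    by (auto simp: Hp_def Hn_def Kp_def Kn_def)
  have parts_integrable: "integrable p Hp" "integrable p Hn" "integrable q Kp" "integrable q Kn"
    unfolding Hp_def Hn_def Kp_def Kn_def using integrable by auto
  have "\<Phi> (\<lambda>a b. ennreal (h a)) = ennreal (\<integral>x. h x \<partial>p)"
    if "h \<in> borel_measurable borel" "integrable p h" "\<And>x. 0 \<le> h x" for h
    using that by (simp add: joint_functional_fst[OF \<Phi>] nn_integral_eq_integral)
  then have parts_fst: "\<Phi> (\<lambda>a b. ennreal (Hp a)) = ennreal (\<integral>x. Hp x \<partial>p)"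
      "\<Phi> (\<lambda>a b. ennreal (Hn a)) = ennreal (\<integral>x. Hn x \<partial>p)"
    using parts_integrable parts_nonneg by simp_all
  have "\<Phi> (\<lambda>a b. ennreal (h b)) = ennreal (\<integral>x. h x \<partial>q)"
    if "h \<in> borel_measurable borel" "integrable q h" "\<And>x. 0 \<le> h x" for h
    using that by (simp add: joint_functional_snd[OF \<Phi>] nn_integral_eq_integral)
  then have parts_snd: "\<Phi> (\<lambda>a b. ennreal (Kp b)) = ennreal (\<integral>x. Kp x \<partial>q)"
      "\<Phi> (\<lambda>a b. ennreal (Kn b)) = ennreal (\<integral>x. Kn x \<partial>q)"
    using parts_integrable parts_nonneg by simp_all
  note add = joint_functional_add[OF \<Phi>]
  have "\<Phi> (\<lambda>a b. ennreal (f a b)) + (ennreal (\<integral>x. Hn x \<partial>p) + ennreal (\<integral>x. Kn x \<partial>q))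
      = \<Phi> (\<lambda>a b. ennreal (f a b) + ennreal (Hn a) + ennreal (Kn b))"
    by (subst add, measurable, subst add, measurable) (simp add: parts_fst parts_snd add.assoc)
  also have "\<dots> \<le> \<Phi> (\<lambda>a b. ennreal (g a b) + ennreal (Hp a) + ennreal (Kp b))"
  proof (rule joint_functional_mono[OF \<Phi>])
    fix a b
    have "f a b + Hn a + Kn b \<le> g a b + Hp a + Kp b"
      using pointwise[of a b] by (auto simp: Hp_def Hn_def Kp_def Kn_def max_def)
    then show "ennreal (f a b) + ennreal (Hn a) + ennreal (Kn b) \<le> ennreal (g a b) + ennreal (Hp a) + ennreal (Kp b)"
      using nonneg parts_nonneg by (simp flip: ennreal_plus)
  qed
  also have "\<dots> = \<Phi> (\<lambda>a b. ennreal (g a b)) + (ennreal (\<integral>x. Hp x \<partial>p) + ennreal (\<integral>x. Kp x \<partial>q))"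
    by (subst add, measurable, subst add, measurable) (simp add: parts_fst parts_snd add.assoc)
  also have "\<dots> \<le> \<Phi> (\<lambda>a b. ennreal (g a b)) + (ennreal (\<integral>x. Hn x \<partial>p) + ennreal (\<integral>x. Kn x \<partial>q))"
  proof -
    have "(\<integral>x. Hp x \<partial>p) + (\<integral>x. Kp x \<partial>q) \<le> (\<integral>x. Hn x \<partial>p) + (\<integral>x. Kn x \<partial>q)"
      using balance integral_eq_pos_part_minus_neg_part[OF integrable(1)]
        integral_eq_pos_part_minus_neg_part[OF integrable(2)]
      unfolding Hp_def Hn_def Kp_def Kn_def by linarith
    then show ?thesis
      by (intro add_left_mono)
        (simp add: parts_nonneg Bochner_Integration.integral_nonneg flip: ennreal_plus)
  qed
  finally show ?thesis
    by (simp add: ennreal_add_left_cancel_le add.commute[of "\<Phi> _"])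
qed

section \<open>The shrinking map\<close>

definition shrink_factor :: "real \<Rightarrow> real measure \<Rightarrow> real" where
  "shrink_factor \<sigma> q = (if std_dev q \<le> \<sigma> then 1 else \<sigma> / std_dev q)"

definition shrink_map :: "real \<Rightarrow> real \<Rightarrow> real measure \<Rightarrow> real \<Rightarrow> real" where
  "shrink_map \<mu> \<sigma> q y = \<mu> + shrink_factor \<sigma> q * (y - mean q)"

definition shrink_law :: "real \<Rightarrow> real \<Rightarrow> real measure \<Rightarrow> real measure" where
  "shrink_law \<mu> \<sigma> q = distr q borel (shrink_map \<mu> \<sigma> q)"

lemma shrink_map_measurable [measurable]: "shrink_map \<mu> \<sigma> q \<in> borel_measurable borel"
  unfolding shrink_map_def by measurable

text \<open>For c < 1 the slack is (1 - c) (\<sigma> (b - m) - s (a - \<mu>))^2 / (\<sigma> s).\<close>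
lemma shrink_square_le:
  fixes a b \<mu> m \<sigma> s c :: real
  assumes "0 < \<sigma>" and c: "c = (if s \<le> \<sigma> then 1 else \<sigma> / s)"
  shows "(a - (\<mu> + c * (b - m)))\<^sup>2 \<le> (a - b)\<^sup>2
    + ((1 - c) * (s / \<sigma>) * (a - \<mu>)\<^sup>2 - 2 * (\<mu> - m) * (a - \<mu>) - (\<mu> - m)\<^sup>2)
    + (2 * (\<mu> - m) * (b - m) - (1 - c) * (b - m)\<^sup>2)"
proof (cases "s \<le> \<sigma>")
  case True
  then show ?thesis by (simp add: c power2_eq_square algebra_simps)
next
  case False
  define u v where "u = a - \<mu>" and "v = b - m"
  have "0 \<le> (1 - c) * ((\<sigma> * v - s * u)\<^sup>2 / (\<sigma> * s))"
    using False assms by (simp add: c)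
  also have "(1 - c) * ((\<sigma> * v - s * u)\<^sup>2 / (\<sigma> * s)) = (a - b)\<^sup>2
    + ((1 - c) * (s / \<sigma>) * (a - \<mu>)\<^sup>2 - 2 * (\<mu> - m) * (a - \<mu>) - (\<mu> - m)\<^sup>2)
    + (2 * (\<mu> - m) * (b - m) - (1 - c) * (b - m)\<^sup>2) - (a - (\<mu> + c * (b - m)))\<^sup>2"
    using False assms unfolding u_def v_def c by (simp add: field_simps power2_eq_square)
  finally show ?thesis by simp
qed

lemma shrink_map_joint_functional_le:
  assumes \<sigma>: "0 < \<sigma>" and q: "real_law q" "integrable q (\<lambda>x. x\<^sup>2)"
    and \<Phi>: "joint_functional \<Phi> (gauss \<mu> \<sigma>) q"
  shows "\<Phi> (\<lambda>a b. ennreal ((a - shrink_map \<mu> \<sigma> q b)\<^sup>2)) \<le> \<Phi> (\<lambda>a b. ennreal ((a - b)\<^sup>2))"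
proof -
  interpret G: prob_space "gauss \<mu> \<sigma>" by (rule prob_space_gauss[OF \<sigma>])
  interpret Q: prob_space q using q by (simp add: real_law_def)
  define m s c d where "m = mean q" and "s = std_dev q" and "c = shrink_factor \<sigma> q" and "d = \<mu> - m"
  define H where "H x = (1 - c) * (s / \<sigma>) * (x - \<mu>)\<^sup>2 - 2 * d * (x - \<mu>) - d\<^sup>2" for x
  define K where "K y = 2 * d * (y - m) - (1 - c) * (y - m)\<^sup>2" for y
  have iG: "integrable (gauss \<mu> \<sigma>) (\<lambda>x. (x - \<mu>) ^ k)" for k
    by (rule integrable_gauss_centered_power[OF \<sigma>])
  have iG1: "integrable (gauss \<mu> \<sigma>) (\<lambda>x. x - \<mu>)" using iG[of 1] by simp
  have iQ1: "integrable q (\<lambda>x. x - m)" using real_law_integrable_id[OF q] by auto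
  have iQ2: "integrable q (\<lambda>x. (x - m)\<^sup>2)" by (rule real_law_integrable_shifted_square[OF q])
  have "(\<integral>x. H x \<partial>gauss \<mu> \<sigma>) = (1 - c) * (s / \<sigma>) * \<sigma>\<^sup>2 - d\<^sup>2"
    unfolding H_def using iG[of 2] iG1 \<sigma>
    by (simp add: integral_gauss_centered integral_gauss_centered_square G.prob_space)
  moreover have "(\<integral>y. K y \<partial>q) = 2 * d * (\<integral>y. y - m \<partial>q) - (1 - c) * (\<integral>y. (y - m)\<^sup>2 \<partial>q)"
    unfolding K_def using iQ1 iQ2 by simp
  moreover have "2 * d * (\<integral>y. y - m \<partial>q) - (1 - c) * (\<integral>y. (y - m)\<^sup>2 \<partial>q) = - ((1 - c) * s\<^sup>2)"
    by (simp add: m_def s_def real_law_integral_centered[OF q] real_law_integral_centered_square[OF q] algebra_simps)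
  moreover have "(1 - c) * (s / \<sigma>) * \<sigma>\<^sup>2 - (1 - c) * s\<^sup>2 = (1 - c) * s * (\<sigma> - s)"
    using \<sigma> by (simp add: power2_eq_square field_simps)
  moreover have "(1 - c) * s * (\<sigma> - s) \<le> 0"
    using \<sigma> std_dev_nonneg[of q]
    by (cases "s \<le> \<sigma>") (auto simp: c_def s_def shrink_factor_def intro!: mult_nonneg_nonpos)
  ultimately have balance: "(\<integral>x. H x \<partial>gauss \<mu> \<sigma>) + (\<integral>y. K y \<partial>q) \<le> 0"
    using zero_le_power2[of d] by linarith
  show ?thesis
  proof (rule joint_functional_le_by_correction[OF \<Phi> _ _ _ _ _ _ _ _ _ balance])
    show "(a - shrink_map \<mu> \<sigma> q b)\<^sup>2 \<le> (a - b)\<^sup>2 + H a + K b" for a b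
      unfolding shrink_map_def H_def K_def d_def m_def[symmetric] c_def[symmetric]
      by (rule shrink_square_le[OF \<sigma>]) (simp add: c_def s_def shrink_factor_def)
    show "integrable (gauss \<mu> \<sigma>) H" unfolding H_def using iG[of 2] iG1 by auto
    show "integrable q K" unfolding K_def using iQ1 iQ2 by auto
  qed (auto simp: H_def K_def)
qed

section \<open>Couplings\<close>

lemma sets_borel_pair: "sets (borel \<Otimes>\<^sub>M borel) = sets (borel :: (real \<times> real) measure)"
  by (simp only: borel_prod)

context
  fixes \<pi> p q
  assumes coupling: "\<pi> \<in> couplings p q"
begin

lemma coupling_prob_space: "prob_space \<pi>"
  and coupling_fst: "distr \<pi> borel fst = p"
  and coupling_snd: "distr \<pi> borel snd = q"
  using coupling by (auto simp: couplings_def)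

lemma sets_coupling: "sets \<pi> = sets (borel \<Otimes>\<^sub>M borel)"
  using coupling by (simp add: couplings_def sets_borel_pair)

lemma coupling_measurable_iff: "f \<in> measurable \<pi> N \<longleftrightarrow> f \<in> measurable (borel \<Otimes>\<^sub>M borel) N"
  by (simp add: measurable_cong_sets[OF sets_coupling refl])

lemma nn_integral_coupling_fst:
  "h \<in> borel_measurable borel \<Longrightarrow> (\<integral>\<^sup>+z. h (fst z) \<partial>\<pi>) = (\<integral>\<^sup>+a. h a \<partial>p)"
  by (subst coupling_fst[symmetric], subst nn_integral_distr) (simp_all add: coupling_measurable_iff)

lemma nn_integral_coupling_snd:
  "h \<in> borel_measurable borel \<Longrightarrow> (\<integral>\<^sup>+z. h (snd z) \<partial>\<pi>) = (\<integral>\<^sup>+b. h b \<partial>q)"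
  by (subst coupling_snd[symmetric], subst nn_integral_distr) (simp_all add: coupling_measurable_iff)

lemma joint_functional_coupling: "joint_functional (\<lambda>g. \<integral>\<^sup>+z. g (fst z) (snd z) \<partial>\<pi>) p q"
proof (rule joint_functionalI)
  fix g h :: "real \<Rightarrow> real \<Rightarrow> ennreal"
  assume "(\<lambda>(a, b). g a b) \<in> borel_measurable (borel \<Otimes>\<^sub>M borel)"
    and "(\<lambda>(a, b). h a b) \<in> borel_measurable (borel \<Otimes>\<^sub>M borel)"
  then show "(\<integral>\<^sup>+z. g (fst z) (snd z) + h (fst z) (snd z) \<partial>\<pi>)
      = (\<integral>\<^sup>+z. g (fst z) (snd z) \<partial>\<pi>) + (\<integral>\<^sup>+z. h (fst z) (snd z) \<partial>\<pi>)"
    by (intro nn_integral_add) (simp_all add: coupling_measurable_iff case_prod_beta')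
qed (auto intro: nn_integral_mono nn_integral_coupling_fst nn_integral_coupling_snd)

end

lemma W2sq_finite_imp_integrable_square:
  assumes p: "integrable p (\<lambda>x. x\<^sup>2)" and q: "real_law q" and W: "W2sq p q < \<top>"
  shows "integrable q (\<lambda>x. x\<^sup>2)"
proof -
  obtain \<pi> where \<pi>: "\<pi> \<in> couplings p q"
    and cost: "(\<integral>\<^sup>+z. ennreal ((fst z - snd z)\<^sup>2) \<partial>\<pi>) < \<top>"
    using W unfolding W2sq_def INF_less_iff by blast
  note measurable = coupling_measurable_iff[OF \<pi>]
  have "(\<integral>\<^sup>+x. ennreal (x\<^sup>2) \<partial>q) = (\<integral>\<^sup>+z. ennreal ((snd z)\<^sup>2) \<partial>\<pi>)"
    by (rule nn_integral_coupling_snd[OF \<pi>, symmetric]) simp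
  also have "\<dots> \<le> (\<integral>\<^sup>+z. 2 * ennreal ((fst z)\<^sup>2) + 2 * ennreal ((fst z - snd z)\<^sup>2) \<partial>\<pi>)"
  proof (rule nn_integral_mono)
    fix z :: "real \<times> real"
    have "(snd z)\<^sup>2 \<le> 2 * (fst z)\<^sup>2 + 2 * (fst z - snd z)\<^sup>2"
      using zero_le_power2[of "2 * fst z - snd z"] by (simp add: power2_eq_square algebra_simps)
    then have "ennreal ((snd z)\<^sup>2) \<le> ennreal (2 * (fst z)\<^sup>2 + 2 * (fst z - snd z)\<^sup>2)"
      by (rule ennreal_leI)
    then show "ennreal ((snd z)\<^sup>2) \<le> 2 * ennreal ((fst z)\<^sup>2) + 2 * ennreal ((fst z - snd z)\<^sup>2)"
      by (simp add: ennreal_mult ennreal_plus)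
  qed
  also have "\<dots> = 2 * (\<integral>\<^sup>+x. ennreal (x\<^sup>2) \<partial>p) + 2 * (\<integral>\<^sup>+z. ennreal ((fst z - snd z)\<^sup>2) \<partial>\<pi>)"
    using nn_integral_coupling_fst[OF \<pi>, of "\<lambda>x. ennreal (x\<^sup>2)"]
    by (simp add: measurable nn_integral_add nn_integral_cmult)
  also have "\<dots> < \<top>"
    using p cost by (simp add: ennreal_mult_less_top nn_integral_eq_integral)
  finally have "(\<integral>\<^sup>+x. ennreal (norm (x\<^sup>2)) \<partial>q) < \<top>" by simp
  moreover have "(\<lambda>x. x\<^sup>2) \<in> borel_measurable q" using q by (simp add: real_law_measurable_iff)
  ultimately show ?thesis by (intro integrableI_bounded) auto
qed

lemma W2sq_distr_snd_le:
  assumes T [measurable]: "T \<in> borel_measurable borel"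
  shows "W2sq p (distr q borel T) \<le> (INF \<pi> \<in> couplings p q. \<integral>\<^sup>+z. ennreal ((fst z - T (snd z))\<^sup>2) \<partial>\<pi>)"
  unfolding W2sq_def
proof (rule INF_greatest)
  fix \<pi> assume \<pi>: "\<pi> \<in> couplings p q"
  interpret prob_space \<pi> by (rule coupling_prob_space[OF \<pi>])
  define T2 where "T2 z = (fst z, T (snd z))" for z :: "real \<times> real"
  have T2: "T2 \<in> measurable \<pi> borel"
    unfolding coupling_measurable_iff[OF \<pi>] T2_def by (simp add: borel_prod[symmetric])
  have [measurable]: "fst \<in> borel_measurable (borel :: (real \<times> real) measure)"
      "snd \<in> borel_measurable (borel :: (real \<times> real) measure)"
      "(\<lambda>z. (fst z - snd z)\<^sup>2) \<in> borel_measurable (borel :: (real \<times> real) measure)"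
    by (subst borel_prod[symmetric]; measurable)+
  have "distr \<pi> borel T2 \<in> couplings p (distr q borel T)"
    unfolding couplings_def
  proof (intro CollectI conjI)
    show "prob_space (distr \<pi> borel T2)" by (rule prob_space_distr[OF T2])
    have "distr (distr \<pi> borel T2) borel fst = distr \<pi> borel fst"
      by (simp add: distr_distr T2 comp_def T2_def)
    then show "distr (distr \<pi> borel T2) borel fst = p" by (simp add: coupling_fst[OF \<pi>])
    have "distr (distr \<pi> borel T2) borel snd = distr \<pi> borel (snd \<circ> T2)"
      by (rule distr_distr[OF _ T2]) measurable
    also have "snd \<circ> T2 = T \<circ> snd" by (auto simp: T2_def)
    also have "distr \<pi> borel (T \<circ> snd) = distr (distr \<pi> borel snd) borel T"
      by (rule distr_distr[symmetric]) (simp_all add: coupling_measurable_iff[OF \<pi>])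
    finally show "distr (distr \<pi> borel T2) borel snd = distr q borel T" by (simp add: coupling_snd[OF \<pi>])
  qed simp
  then have "W2sq p (distr q borel T) \<le> (\<integral>\<^sup>+z. ennreal ((fst z - snd z)\<^sup>2) \<partial>distr \<pi> borel T2)"
    unfolding W2sq_def by (rule INF_lower)
  also have "\<dots> = (\<integral>\<^sup>+z. ennreal ((fst z - T (snd z))\<^sup>2) \<partial>\<pi>)"
    by (simp add: nn_integral_distr[OF T2] T2_def)
  finally show "(INF \<pi>\<in>couplings p (distr q borel T). \<integral>\<^sup>+z. ennreal ((fst z - snd z)\<^sup>2) \<partial>\<pi>)
      \<le> (\<integral>\<^sup>+z. ennreal ((fst z - T (snd z))\<^sup>2) \<partial>\<pi>)" unfolding W2sq_def .
qed

section \<open>The shrunk law\<close>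

context
  fixes \<mu> \<sigma> :: real and q :: "real measure"
  assumes \<sigma>: "0 < \<sigma>" and law: "real_law q" and square_integrable: "integrable q (\<lambda>x. x\<^sup>2)"
begin

interpretation prob_space q
  using law by (simp add: real_law_def)

lemma shrink_map_measurable_law: "shrink_map \<mu> \<sigma> q \<in> borel_measurable q"
  using law by (simp add: real_law_measurable_iff)

lemma real_law_shrink_law: "real_law (shrink_law \<mu> \<sigma> q)"
  unfolding shrink_law_def real_law_def
  using shrink_map_measurable_law by (auto intro!: prob_space_distr)

lemma integrable_shrink_law_square: "integrable (shrink_law \<mu> \<sigma> q) (\<lambda>x. x\<^sup>2)"
proof -
  define c m where "c = shrink_factor \<sigma> q" and "m = mean q"
  have "(\<lambda>y. (shrink_map \<mu> \<sigma> q y)\<^sup>2) = (\<lambda>y. c\<^sup>2 * (y - m)\<^sup>2 + 2 * \<mu> * c * (y - m) + \<mu>\<^sup>2)"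
    by (auto simp: shrink_map_def c_def m_def power2_eq_square algebra_simps)
  moreover have "integrable q (\<lambda>y. c\<^sup>2 * (y - m)\<^sup>2 + 2 * \<mu> * c * (y - m) + \<mu>\<^sup>2)"
    using real_law_integrable_shifted_square[OF law square_integrable, of m]
      real_law_integrable_id[OF law square_integrable] by auto
  ultimately show ?thesis
    unfolding shrink_law_def by (subst integrable_distr_eq[OF shrink_map_measurable_law]) auto
qed

lemma integral_shrink_law: "(\<integral>x. f x \<partial>shrink_law \<mu> \<sigma> q) = (\<integral>y. f (shrink_map \<mu> \<sigma> q y) \<partial>q)"
  if "f \<in> borel_measurable borel" for f :: "real \<Rightarrow> real"
  unfolding shrink_law_def using that by (rule integral_distr[OF shrink_map_measurable_law])

lemma mean_shrink_law: "mean (shrink_law \<mu> \<sigma> q) = \<mu>"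
proof -
  have "mean (shrink_law \<mu> \<sigma> q) = (\<integral>y. shrink_map \<mu> \<sigma> q y \<partial>q)"
    unfolding mean_def[of "shrink_law \<mu> \<sigma> q"] by (rule integral_shrink_law) simp
  also have "\<dots> = (\<integral>y. \<mu> + shrink_factor \<sigma> q * (y - mean q) \<partial>q)"
    by (simp add: shrink_map_def)
  also have "\<dots> = \<mu>"
    using real_law_integrable_id[OF law square_integrable] real_law_integral_centered[OF law square_integrable]
    by (simp add: prob_space)
  finally show ?thesis .
qed

lemma std_dev_shrink_law: "std_dev (shrink_law \<mu> \<sigma> q) = shrink_factor \<sigma> q * std_dev q"
proof -
  have "(\<integral>x. (x - mean (shrink_law \<mu> \<sigma> q))\<^sup>2 \<partial>shrink_law \<mu> \<sigma> q)
      = (\<integral>y. (shrink_factor \<sigma> q)\<^sup>2 * (y - mean q)\<^sup>2 \<partial>q)"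
    by (simp add: mean_shrink_law integral_shrink_law shrink_map_def power_mult_distrib)
  also have "\<dots> = (shrink_factor \<sigma> q * std_dev q)\<^sup>2"
    by (simp add: real_law_integral_centered_square[OF law square_integrable] power_mult_distrib)
  finally show ?thesis
    using \<sigma> std_dev_nonneg[of q] by (simp add: std_dev_def shrink_factor_def)
qed

lemma std_dev_shrink_law_le: "std_dev (shrink_law \<mu> \<sigma> q) \<le> \<sigma>"
  using \<sigma> std_dev_nonneg[of q] by (simp add: std_dev_shrink_law shrink_factor_def)

lemma W2sq_shrink_law_le: "W2sq (gauss \<mu> \<sigma>) (shrink_law \<mu> \<sigma> q) \<le> W2sq (gauss \<mu> \<sigma>) q"
proof -
  have "W2sq (gauss \<mu> \<sigma>) (shrink_law \<mu> \<sigma> q)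
      \<le> (INF \<pi> \<in> couplings (gauss \<mu> \<sigma>) q. \<integral>\<^sup>+z. ennreal ((fst z - shrink_map \<mu> \<sigma> q (snd z))\<^sup>2) \<partial>\<pi>)"
    unfolding shrink_law_def by (rule W2sq_distr_snd_le) simp
  also have "\<dots> \<le> W2sq (gauss \<mu> \<sigma>) q"
    unfolding W2sq_def
    using shrink_map_joint_functional_le[OF \<sigma> law square_integrable joint_functional_coupling]
    by (auto intro!: INF_superset_mono)
  finally show ?thesis .
qed

end

section \<open>Block codes\<close>

definition letter_expectation :: "real measure \<Rightarrow> nat \<Rightarrow> nat \<Rightarrow> nat \<Rightarrow> ((nat \<Rightarrow> real) \<Rightarrow> nat \<Rightarrow> nat \<Rightarrow> real)
    \<Rightarrow> (nat \<Rightarrow> nat \<Rightarrow> (nat \<Rightarrow> real) measure) \<Rightarrow> nat \<Rightarrow> (real \<Rightarrow> real \<Rightarrow> ennreal) \<Rightarrow> ennreal" where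
  "letter_expectation pX n M L enc dec t g = (\<Sum>k<L. \<Sum>j<M. ennreal (1 / real L) *
     (\<integral>\<^sup>+x. ennreal (enc x k j) * (\<integral>\<^sup>+y. g (x t) (y t) \<partial>dec j k) \<partial>src pX n))"

lemma avg_distortion_letter_expectation:
  "avg_distortion pX n M L enc dec
     = ennreal (1 / real n) * (\<Sum>t<n. letter_expectation pX n M L enc dec t (\<lambda>a b. ennreal ((a - b)\<^sup>2)))"
  unfolding avg_distortion_def letter_expectation_def ..

text \<open>index_prob pX n L enc k j is the probability P(K = k, J = j) of seed k and index j.\<close>
definition index_prob :: "real measure \<Rightarrow> nat \<Rightarrow> nat \<Rightarrow> ((nat \<Rightarrow> real) \<Rightarrow> nat \<Rightarrow> nat \<Rightarrow> real)
    \<Rightarrow> nat \<Rightarrow> nat \<Rightarrow> real" where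
  "index_prob pX n L enc k j = (1 / real L) * (\<integral>x. enc x k j \<partial>src pX n)"

definition map_decoder :: "nat \<Rightarrow> (real \<Rightarrow> real) \<Rightarrow> (nat \<Rightarrow> nat \<Rightarrow> (nat \<Rightarrow> real) measure)
    \<Rightarrow> nat \<Rightarrow> nat \<Rightarrow> (nat \<Rightarrow> real) measure" where
  "map_decoder n T dec j k = distr (dec j k) (PiM {..<n} (\<lambda>_. borel)) (compose {..<n} T)"

locale block_code =
  fixes pX :: "real measure" and n M L :: nat
    and enc :: "(nat \<Rightarrow> real) \<Rightarrow> nat \<Rightarrow> nat \<Rightarrow> real"
    and dec :: "nat \<Rightarrow> nat \<Rightarrow> (nat \<Rightarrow> real) measure"
  assumes source: "real_law pX" and code: "is_code n M L enc dec"
begin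

abbreviation block_space :: "(nat \<Rightarrow> real) measure" where
  "block_space \<equiv> PiM {..<n} (\<lambda>_. borel)"

lemma sets_src: "sets (src pX n) = sets block_space"
  unfolding src_def using source by (intro sets_PiM_cong) (auto simp: real_law_def)

lemma prob_space_src: "prob_space (src pX n)"
  unfolding src_def using source by (intro prob_space_PiM) (simp add: real_law_def)

lemma enc_measurable [measurable]: "(\<lambda>x. enc x k j) \<in> borel_measurable (src pX n)"
  using code by (simp add: is_code_def measurable_cong_sets[OF sets_src refl])

lemma enc_nonneg: "0 \<le> enc x k j"
  using code by (simp add: is_code_def)

lemma enc_sum: "k < L \<Longrightarrow> (\<Sum>j<M. enc x k j) = 1"
  using code by (simp add: is_code_def)

lemma enc_le_1: "k < L \<Longrightarrow> j < M \<Longrightarrow> enc x k j \<le> 1"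
  using member_le_sum[of j "{..<M}" "\<lambda>j. enc x k j"] enc_sum[of k x] enc_nonneg by auto

lemma prob_space_dec: "j < M \<Longrightarrow> k < L \<Longrightarrow> prob_space (dec j k)"
  using code by (simp add: is_code_def)

lemma sets_dec: "j < M \<Longrightarrow> k < L \<Longrightarrow> sets (dec j k) = sets block_space"
  using code by (simp add: is_code_def)

lemma code_size_pos: "0 < n" "0 < M" "0 < L"
  using code by (auto simp: is_code_def)

lemma letter_measurable: "t < n \<Longrightarrow> (\<lambda>y. y t) \<in> borel_measurable block_space"
  by (rule measurable_component_singleton) simp

lemma measurable_inner_integral:
  assumes g [measurable]: "(\<lambda>(a, b). g a b) \<in> borel_measurable (borel \<Otimes>\<^sub>M borel)"
    and jk: "j < M" "k < L" and t: "t < n"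
  shows "(\<lambda>x. \<integral>\<^sup>+y. g (x t) (y t) \<partial>dec j k) \<in> borel_measurable (src pX n)"
proof -
  interpret prob_space "dec j k" by (rule prob_space_dec[OF jk])
  have "(\<lambda>z. (fst z t, snd z t)) \<in> measurable (block_space \<Otimes>\<^sub>M block_space) (borel \<Otimes>\<^sub>M borel)"
    using t by (intro measurable_Pair measurable_compose[OF measurable_fst letter_measurable]
        measurable_compose[OF measurable_snd letter_measurable])
  from measurable_comp[OF this g]
  have "(\<lambda>(x, y). g (x t) (y t)) \<in> borel_measurable (block_space \<Otimes>\<^sub>M block_space)"
    by (simp add: comp_def case_prod_beta')
  then have "(\<lambda>(x, y). g (x t) (y t)) \<in> borel_measurable (src pX n \<Otimes>\<^sub>M dec j k)"
    by (simp add: measurable_cong_sets[OF sets_pair_measure_cong[OF sets_src sets_dec[OF jk]] refl])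
  then show ?thesis by (rule borel_measurable_nn_integral)
qed

lemma measurable_letter_section:
  assumes g: "(\<lambda>(a, b). g a b) \<in> borel_measurable (borel \<Otimes>\<^sub>M borel)"
    and jk: "j < M" "k < L" and t: "t < n"
  shows "(\<lambda>y. g a (y t)) \<in> borel_measurable (dec j k)"
proof -
  have "(\<lambda>b. g a b) \<in> borel_measurable borel"
    using measurable_Pair2[OF g, of a] by simp
  from measurable_comp[OF letter_measurable[OF t] this]
  show ?thesis by (simp add: comp_def measurable_cong_sets[OF sets_dec[OF jk] refl])
qed

lemma letter_expectation_add:
  assumes g: "(\<lambda>(a, b). g a b) \<in> borel_measurable (borel \<Otimes>\<^sub>M borel)"
    and h: "(\<lambda>(a, b). h a b) \<in> borel_measurable (borel \<Otimes>\<^sub>M borel)" and t: "t < n"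
  shows "letter_expectation pX n M L enc dec t (\<lambda>a b. g a b + h a b)
    = letter_expectation pX n M L enc dec t g + letter_expectation pX n M L enc dec t h"
proof -
  have term_add: "ennreal (1 / real L) *
      (\<integral>\<^sup>+x. ennreal (enc x k j) * (\<integral>\<^sup>+y. g (x t) (y t) + h (x t) (y t) \<partial>dec j k) \<partial>src pX n)
    = ennreal (1 / real L) * (\<integral>\<^sup>+x. ennreal (enc x k j) * (\<integral>\<^sup>+y. g (x t) (y t) \<partial>dec j k) \<partial>src pX n)
    + ennreal (1 / real L) * (\<integral>\<^sup>+x. ennreal (enc x k j) * (\<integral>\<^sup>+y. h (x t) (y t) \<partial>dec j k) \<partial>src pX n)"
    if jk: "j < M" "k < L" for j k
  proof -
    have "(\<integral>\<^sup>+x. ennreal (enc x k j) * (\<integral>\<^sup>+y. g (x t) (y t) + h (x t) (y t) \<partial>dec j k) \<partial>src pX n)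
      = (\<integral>\<^sup>+x. ennreal (enc x k j) * (\<integral>\<^sup>+y. g (x t) (y t) \<partial>dec j k)
          + ennreal (enc x k j) * (\<integral>\<^sup>+y. h (x t) (y t) \<partial>dec j k) \<partial>src pX n)"
      by (intro nn_integral_cong) (simp only: nn_integral_add[OF measurable_letter_section[OF g jk t]
          measurable_letter_section[OF h jk t]] distrib_left)
    also have "\<dots> = (\<integral>\<^sup>+x. ennreal (enc x k j) * (\<integral>\<^sup>+y. g (x t) (y t) \<partial>dec j k) \<partial>src pX n)
        + (\<integral>\<^sup>+x. ennreal (enc x k j) * (\<integral>\<^sup>+y. h (x t) (y t) \<partial>dec j k) \<partial>src pX n)"
      using measurable_inner_integral[OF g jk t] measurable_inner_integral[OF h jk t]
      by (intro nn_integral_add) auto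
    finally show ?thesis by (simp only: distrib_left)
  qed
  show ?thesis
    unfolding letter_expectation_def
    by (subst sum.distrib[symmetric], subst sum.distrib[symmetric],
        rule sum.cong[OF refl], rule sum.cong[OF refl], rule term_add) auto
qed

lemma letter_expectation_mono:
  "(\<And>a b. g a b \<le> h a b) \<Longrightarrow>
    letter_expectation pX n M L enc dec t g \<le> letter_expectation pX n M L enc dec t h"
  unfolding letter_expectation_def
  by (intro sum_mono mult_left_mono nn_integral_mono) auto

lemma nn_integral_src_letter:
  assumes h: "h \<in> borel_measurable borel" and t: "t < n"
  shows "(\<integral>\<^sup>+x. h (x t) \<partial>src pX n) = (\<integral>\<^sup>+a. h a \<partial>pX)"
proof -
  have sets_pX: "sets pX = sets borel" using source by (simp add: real_law_def)
  have "(\<lambda>x. x t) \<in> measurable (src pX n) pX"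
    unfolding src_def using t by (intro measurable_component_singleton) simp
  then have "(\<integral>\<^sup>+a. h a \<partial>distr (src pX n) pX (\<lambda>x. x t)) = (\<integral>\<^sup>+x. h (x t) \<partial>src pX n)"
    by (rule nn_integral_distr) (simp add: measurable_cong_sets[OF sets_pX refl] h)
  moreover have "distr (src pX n) pX (\<lambda>x. x t) = pX"
    unfolding src_def using t source by (intro distr_PiM_component) (auto simp: real_law_def)
  ultimately show ?thesis by simp
qed

lemma letter_expectation_fst:
  assumes h [measurable]: "h \<in> borel_measurable borel" and t: "t < n"
  shows "letter_expectation pX n M L enc dec t (\<lambda>a b. h a) = (\<integral>\<^sup>+a. h a \<partial>pX)"
proof -
  have h_letter [measurable]: "(\<lambda>x. h (x t)) \<in> borel_measurable (src pX n)"
    using measurable_comp[OF letter_measurable[OF t] h]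
    by (simp add: comp_def measurable_cong_sets[OF sets_src refl])
  have enc_average: "(\<Sum>j<M. \<integral>\<^sup>+x. ennreal (enc x k j) * h (x t) \<partial>src pX n) = (\<integral>\<^sup>+x. h (x t) \<partial>src pX n)"
    if k: "k < L" for k
  proof -
    have "(\<Sum>j<M. \<integral>\<^sup>+x. ennreal (enc x k j) * h (x t) \<partial>src pX n)
        = (\<integral>\<^sup>+x. (\<Sum>j<M. ennreal (enc x k j)) * h (x t) \<partial>src pX n)"
      by (simp add: nn_integral_sum sum_distrib_right)
    also have "\<dots> = (\<integral>\<^sup>+x. h (x t) \<partial>src pX n)"
      using k by (simp add: sum_ennreal enc_nonneg enc_sum)
    finally show ?thesis .
  qed
  have "letter_expectation pX n M L enc dec t (\<lambda>a b. h a)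
      = (\<Sum>k<L. ennreal (1 / real L) * (\<Sum>j<M. \<integral>\<^sup>+x. ennreal (enc x k j) * h (x t) \<partial>src pX n))"
    unfolding letter_expectation_def sum_distrib_left
    by (intro sum.cong refl) (simp add: prob_space.emeasure_space_1[OF prob_space_dec])
  also have "\<dots> = of_nat L * ennreal (1 / real L) * (\<integral>\<^sup>+x. h (x t) \<partial>src pX n)"
    by (simp add: enc_average mult.assoc)
  also have "of_nat L * ennreal (1 / real L) = 1"
    using code_size_pos by (simp add: ennreal_of_nat_eq_real_of_nat ennreal_mult''[symmetric])
  finally show ?thesis by (simp add: nn_integral_src_letter t)
qed

lemma integrable_enc:
  assumes "k < L" "j < M" shows "integrable (src pX n) (\<lambda>x. enc x k j)"
proof -
  interpret prob_space "src pX n" by (rule prob_space_src)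
  show ?thesis using assms enc_le_1 enc_nonneg by (intro integrable_const_bound[where B=1]) auto
qed

lemma index_prob_nonneg: "0 \<le> index_prob pX n L enc k j"
  unfolding index_prob_def using enc_nonneg by (auto intro!: Bochner_Integration.integral_nonneg)

lemma nn_integral_enc_mult_const:
  assumes "k < L" "j < M"
  shows "ennreal (1 / real L) * (\<integral>\<^sup>+x. ennreal (enc x k j) * c \<partial>src pX n) = ennreal (index_prob pX n L enc k j) * c"
proof -
  have "(\<integral>\<^sup>+x. ennreal (enc x k j) * c \<partial>src pX n) = ennreal (\<integral>x. enc x k j \<partial>src pX n) * c"
    using assms by (simp add: nn_integral_multc nn_integral_eq_integral integrable_enc enc_nonneg)
  moreover have "ennreal (index_prob pX n L enc k j) = ennreal (1 / real L) * ennreal (\<integral>x. enc x k j \<partial>src pX n)"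
    using enc_nonneg unfolding index_prob_def
    by (intro ennreal_mult) (auto intro!: Bochner_Integration.integral_nonneg)
  ultimately show ?thesis by (simp only: mult.assoc)
qed

lemma nn_integral_recon_iid:
  assumes q: "real_law q" and recon: "recon_iid pX n M L enc dec q"
    and g: "g \<in> borel_measurable block_space"
  shows "(\<integral>\<^sup>+y. g y \<partial>PiM {..<n} (\<lambda>_. q))
    = (\<Sum>k<L. \<Sum>j<M. ennreal (index_prob pX n L enc k j) * (\<integral>\<^sup>+y. g y \<partial>dec j k))"
proof -
  define W where "W = density (count_space ({..<L} \<times> {..<M})) (\<lambda>(k, j). ennreal (index_prob pX n L enc k j))"
  define N where "N = (\<lambda>(k, j). dec j k)"
  have space_W: "space W = {..<L} \<times> {..<M}" by (simp add: W_def)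
  have "space W \<noteq> {}" using code_size_pos by (auto simp: space_W)
  have N: "N \<in> measurable W (subprob_algebra block_space)"
    unfolding W_def
    by (subst measurable_cong_sets[OF sets_density refl])
      (auto simp: N_def space_subprob_algebra sets_dec intro!: prob_space_imp_subprob_space prob_space_dec)
  have nn_integral_W: "(\<integral>\<^sup>+z. f z \<partial>W) = (\<Sum>k<L. \<Sum>j<M. ennreal (index_prob pX n L enc k j) * f (k, j))"
    for f
    by (simp add: W_def nn_integral_density nn_integral_count_space_finite case_prod_beta'
        sum.cartesian_product)
  have emeasure_prob: "emeasure P B = ennreal (measure P B)" if "prob_space P" for P :: "'a measure" and B
    using that by (rule finite_measure.emeasure_eq_measure[OF prob_space.finite_measure])
  have sets_iid: "sets (PiM {..<n} (\<lambda>_. q)) = sets block_space"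
    using q by (intro sets_PiM_cong) (auto simp: real_law_def)
  have "W \<bind> N = PiM {..<n} (\<lambda>_. q)"
  proof (rule measure_eqI)
    have sets_bind: "sets (W \<bind> N) = sets block_space"
      by (rule sets_bind[OF _ \<open>space W \<noteq> {}\<close>]) (auto simp: space_W N_def sets_dec)
    then show "sets (W \<bind> N) = sets (PiM {..<n} (\<lambda>_. q))" using sets_iid by simp
    fix A assume "A \<in> sets (W \<bind> N)"
    then have A: "A \<in> sets block_space" using sets_bind by simp
    have "emeasure (W \<bind> N) A = (\<Sum>k<L. \<Sum>j<M. ennreal (index_prob pX n L enc k j) * emeasure (dec j k) A)"
      by (subst emeasure_bind[OF \<open>space W \<noteq> {}\<close> N A]) (simp add: nn_integral_W N_def)
    also have "\<dots> = ennreal (\<Sum>k<L. \<Sum>j<M. index_prob pX n L enc k j * measure (dec j k) A)"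
      by (simp add: emeasure_prob prob_space_dec index_prob_nonneg
          sum_nonneg ennreal_mult'' flip: sum_ennreal)
    also have "(\<Sum>k<L. \<Sum>j<M. index_prob pX n L enc k j * measure (dec j k) A) = recon_prob pX n M L enc dec A"
      by (simp add: recon_prob_def index_prob_def mult.assoc)
    also have "\<dots> = measure (PiM {..<n} (\<lambda>_. q)) A"
      using recon A by (simp add: recon_iid_def)
    finally show "emeasure (W \<bind> N) A = emeasure (PiM {..<n} (\<lambda>_. q)) A"
      using q by (simp add: emeasure_prob prob_space_PiM real_law_def)
  qed
  then have "(\<integral>\<^sup>+y. g y \<partial>PiM {..<n} (\<lambda>_. q)) = (\<integral>\<^sup>+z. \<integral>\<^sup>+y. g y \<partial>N z \<partial>W)"
    using nn_integral_bind[OF g N] by simp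
  then show ?thesis by (simp add: nn_integral_W N_def)
qed

lemma letter_expectation_snd:
  assumes q: "real_law q" and recon: "recon_iid pX n M L enc dec q"
    and h: "h \<in> borel_measurable borel" and t: "t < n"
  shows "letter_expectation pX n M L enc dec t (\<lambda>a b. h b) = (\<integral>\<^sup>+b. h b \<partial>q)"
proof -
  have sets_q: "sets q = sets borel" and "prob_space q" using q by (auto simp: real_law_def)
  have h_letter: "(\<lambda>y. h (y t)) \<in> borel_measurable block_space"
    using measurable_comp[OF letter_measurable[OF t] h] by (simp add: comp_def)
  have "letter_expectation pX n M L enc dec t (\<lambda>a b. h b)
      = (\<Sum>k<L. \<Sum>j<M. ennreal (index_prob pX n L enc k j) * (\<integral>\<^sup>+y. h (y t) \<partial>dec j k))"
    unfolding letter_expectation_def by (intro sum.cong refl) (simp add: nn_integral_enc_mult_const)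
  also have "\<dots> = (\<integral>\<^sup>+y. h (y t) \<partial>PiM {..<n} (\<lambda>_. q))"
    by (rule nn_integral_recon_iid[OF q recon h_letter, symmetric])
  also have "\<dots> = (\<integral>\<^sup>+b. h b \<partial>distr (PiM {..<n} (\<lambda>_. q)) q (\<lambda>y. y t))"
    using t by (intro nn_integral_distr[symmetric]) (simp_all add: measurable_cong_sets[OF sets_q refl] h)
  also have "distr (PiM {..<n} (\<lambda>_. q)) q (\<lambda>y. y t) = q"
    using t \<open>prob_space q\<close> by (intro distr_PiM_component) auto
  finally show ?thesis .
qed

lemma joint_functional_letter_expectation:
  assumes "real_law q" "recon_iid pX n M L enc dec q" "t < n"
  shows "joint_functional (letter_expectation pX n M L enc dec t) pX q"
  using assms
  by (intro joint_functionalI letter_expectation_add letter_expectation_mono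
      letter_expectation_fst letter_expectation_snd)

context
  fixes T :: "real \<Rightarrow> real"
  assumes T [measurable]: "T \<in> borel_measurable borel"
begin

lemma compose_measurable: "compose {..<n} T \<in> measurable block_space block_space"
  unfolding compose_def
proof (rule measurable_restrict)
  fix i assume "i \<in> {..<n}"
  from measurable_comp[OF measurable_component_singleton[OF this] T]
  show "(\<lambda>y. T (y i)) \<in> measurable block_space borel" by (simp add: comp_def)
qed

lemma compose_measurable_dec: "j < M \<Longrightarrow> k < L \<Longrightarrow> compose {..<n} T \<in> measurable (dec j k) block_space"
  using compose_measurable by (simp add: measurable_cong_sets[OF sets_dec refl])

lemma is_code_map_decoder: "is_code n M L enc (map_decoder n T dec)"
  using code unfolding is_code_def map_decoder_def
  by (auto intro!: prob_space.prob_space_distr prob_space_dec compose_measurable_dec)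

lemma letter_expectation_map_decoder:
  assumes g: "(\<lambda>(a, b). g a b) \<in> borel_measurable (borel \<Otimes>\<^sub>M borel)" and t: "t < n"
  shows "letter_expectation pX n M L enc (map_decoder n T dec) t g
    = letter_expectation pX n M L enc dec t (\<lambda>a b. g a (T b))"
proof -
  have "(\<integral>\<^sup>+y. g a (y t) \<partial>map_decoder n T dec j k) = (\<integral>\<^sup>+y. g a (T (y t)) \<partial>dec j k)"
    if jk: "j < M" "k < L" for a j k
  proof -
    have "(\<lambda>b. g a b) \<in> borel_measurable borel"
      using measurable_Pair2[OF g, of a] by simp
    from measurable_comp[OF letter_measurable[OF t] this]
    have "(\<lambda>y. g a (y t)) \<in> borel_measurable block_space" by (simp add: comp_def)
    then show ?thesis
      unfolding map_decoder_def using t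
      by (simp add: nn_integral_distr[OF compose_measurable_dec[OF jk]] compose_def)
  qed
  then show ?thesis
    unfolding letter_expectation_def by (intro sum.cong refl) simp
qed

lemma recon_iid_map_decoder:
  assumes q: "real_law q" and recon: "recon_iid pX n M L enc dec q"
  shows "recon_iid pX n M L enc (map_decoder n T dec) (distr q borel T)"
  unfolding recon_iid_def
proof
  fix A assume A: "A \<in> sets block_space"
  have sets_q: "sets q = sets borel" and "prob_space q" using q by (auto simp: real_law_def)
  define F where "F = compose {..<n} T"
  define A' where "A' = F -` A \<inter> space block_space"
  have A': "A' \<in> sets block_space"
    unfolding A'_def F_def by (rule measurable_sets[OF compose_measurable A])
  have sets_iid: "sets (PiM {..<n} (\<lambda>_. q)) = sets block_space"
    using sets_q by (intro sets_PiM_cong) auto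
  have "recon_prob pX n M L enc (map_decoder n T dec) A = recon_prob pX n M L enc dec A'"
    unfolding recon_prob_def map_decoder_def
    using measure_distr[OF compose_measurable_dec A] sets_eq_imp_space_eq[OF sets_dec]
    by (intro sum.cong refl) (simp add: A'_def F_def)
  also have "\<dots> = measure (PiM {..<n} (\<lambda>_. q)) A'"
    using recon A' by (simp add: recon_iid_def)
  also have "\<dots> = measure (distr (PiM {..<n} (\<lambda>_. q)) block_space F) A"
    using compose_measurable sets_eq_imp_space_eq[OF sets_iid]
    by (simp add: measure_distr A A'_def F_def measurable_cong_sets[OF sets_iid refl])
  also have "distr (PiM {..<n} (\<lambda>_. q)) block_space F = PiM {..<n} (\<lambda>_. distr q borel T)"
  proof -
    have "distr (PiM {..<n} (\<lambda>_. q)) block_space F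
        = distr (PiM {..<n} (\<lambda>_. q)) (PiM {..<n} (\<lambda>_. distr q borel T)) F"
      by (rule distr_cong) (auto intro!: sets_PiM_cong)
    also have "\<dots> = PiM {..<n} (\<lambda>_. distr q (distr q borel T) T)"
      unfolding F_def using \<open>prob_space q\<close>
      by (intro distr_PiM_finite_prob_space')
        (auto intro: prob_space.prob_space_distr simp: measurable_cong_sets[OF sets_q refl])
    also have "distr q (distr q borel T) T = distr q borel T"
      by (rule distr_cong) auto
    finally show ?thesis .
  qed
  finally show "recon_prob pX n M L enc (map_decoder n T dec) A
      = measure (PiM {..<n} (\<lambda>_. distr q borel T)) A" .
qed

end

end

lemma avg_distortion_shrink_decoder_le:
  assumes \<sigma>: "0 < \<sigma>" and code: "is_code n M L enc dec"
    and q: "real_law q" "integrable q (\<lambda>x. x\<^sup>2)" and recon: "recon_iid (gauss \<mu> \<sigma>) n M L enc dec q"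
  shows "avg_distortion (gauss \<mu> \<sigma>) n M L enc (map_decoder n (shrink_map \<mu> \<sigma> q) dec)
    \<le> avg_distortion (gauss \<mu> \<sigma>) n M L enc dec"
proof -
  interpret block_code "gauss \<mu> \<sigma>" n M L enc dec
    using real_law_gauss[OF \<sigma>] code by unfold_locales
  have "letter_expectation (gauss \<mu> \<sigma>) n M L enc (map_decoder n (shrink_map \<mu> \<sigma> q) dec) t
      (\<lambda>a b. ennreal ((a - b)\<^sup>2))
    \<le> letter_expectation (gauss \<mu> \<sigma>) n M L enc dec t (\<lambda>a b. ennreal ((a - b)\<^sup>2))" if t: "t < n" for t
  proof -
    have "(\<lambda>(a, b). ennreal ((a - b)\<^sup>2)) \<in> borel_measurable (borel \<Otimes>\<^sub>M borel :: (real \<times> real) measure)"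
      by measurable
    then have "letter_expectation (gauss \<mu> \<sigma>) n M L enc (map_decoder n (shrink_map \<mu> \<sigma> q) dec) t
        (\<lambda>a b. ennreal ((a - b)\<^sup>2))
      = letter_expectation (gauss \<mu> \<sigma>) n M L enc dec t (\<lambda>a b. ennreal ((a - shrink_map \<mu> \<sigma> q b)\<^sup>2))"
      by (rule letter_expectation_map_decoder[OF shrink_map_measurable _ t])
    also have "\<dots> \<le> letter_expectation (gauss \<mu> \<sigma>) n M L enc dec t (\<lambda>a b. ennreal ((a - b)\<^sup>2))"
      by (rule shrink_map_joint_functional_le[OF \<sigma> q joint_functional_letter_expectation[OF q(1) recon t]])
    finally show ?thesis .
  qed
  then show ?thesis
    unfolding avg_distortion_letter_expectation by (intro mult_left_mono sum_mono) auto
qed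

lemma ennreal_average_const: "0 < n \<Longrightarrow> ennreal (1 / real n) * (\<Sum>t<n. x) = x"
  by (simp add: ennreal_of_nat_eq_real_of_nat mult.assoc[symmetric] flip: ennreal_mult'')

lemma D_perc_le_D_marg:
  assumes "real_law q" "W2sq pX q \<le> ennreal P"
  shows "D_perc R Rc P pX \<le> D_marg R Rc pX q"
  unfolding D_perc_def D_marg_def
proof (rule Inf_superset_mono, safe)
  fix D n M L enc dec
  assume "is_code n M L enc dec" "ln (real M) / real n \<le> R" "ln (real L) / real n \<le> Rc"
    "avg_distortion pX n M L enc dec \<le> D" "recon_iid pX n M L enc dec q"
  moreover from this(1) have "ennreal (1 / real n) * (\<Sum>t<n. W2sq pX q) \<le> ennreal P"
    using assms(2) by (subst ennreal_average_const) (auto simp: is_code_def)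
  ultimately show "\<exists>n M L enc dec q. is_code n M L enc dec \<and> ln (real M) / real n \<le> R
      \<and> ln (real L) / real n \<le> Rc \<and> avg_distortion pX n M L enc dec \<le> D \<and> real_law q
      \<and> recon_iid pX n M L enc dec q \<and> ennreal (1 / real n) * (\<Sum>t<n. W2sq pX q) \<le> ennreal P"
    using assms(1) by blast
qed

lemma D_marg_shrink_law_le:
  assumes \<sigma>: "0 < \<sigma>" and code: "is_code n M L enc dec"
    and rates: "ln (real M) / real n \<le> R" "ln (real L) / real n \<le> Rc"
    and distortion: "avg_distortion (gauss \<mu> \<sigma>) n M L enc dec \<le> D"
    and q: "real_law q" "integrable q (\<lambda>x. x\<^sup>2)" and recon: "recon_iid (gauss \<mu> \<sigma>) n M L enc dec q"
  shows "D_marg R Rc (gauss \<mu> \<sigma>) (shrink_law \<mu> \<sigma> q) \<le> D"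
  unfolding D_marg_def
proof (rule Inf_lower, intro CollectI exI conjI)
  interpret block_code "gauss \<mu> \<sigma>" n M L enc dec
    using real_law_gauss[OF \<sigma>] code by unfold_locales
  show "is_code n M L enc (map_decoder n (shrink_map \<mu> \<sigma> q) dec)"
    by (rule is_code_map_decoder[OF shrink_map_measurable])
  show "recon_iid (gauss \<mu> \<sigma>) n M L enc (map_decoder n (shrink_map \<mu> \<sigma> q) dec) (shrink_law \<mu> \<sigma> q)"
    unfolding shrink_law_def by (rule recon_iid_map_decoder[OF shrink_map_measurable q(1) recon])
  show "avg_distortion (gauss \<mu> \<sigma>) n M L enc (map_decoder n (shrink_map \<mu> \<sigma> q) dec) \<le> D"
    using avg_distortion_shrink_decoder_le[OF \<sigma> code q recon] distortion by (rule order_trans)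
qed (use rates in auto)

lemma D_perc_le_INF_D_marg:
  "D_perc R Rc P pX \<le> (INF q \<in> {q. real_law q \<and> integrable q (\<lambda>x. x\<^sup>2) \<and> mean q = \<mu>
      \<and> std_dev q \<le> \<sigma> \<and> W2sq pX q \<le> ennreal P}. D_marg R Rc pX q)"
  by (rule INF_greatest) (auto intro: D_perc_le_D_marg)

lemma INF_D_marg_le_D_perc_gauss:
  assumes \<sigma>: "0 < \<sigma>"
  shows "(INF q \<in> {q. real_law q \<and> integrable q (\<lambda>x. x\<^sup>2) \<and> mean q = \<mu> \<and> std_dev q \<le> \<sigma>
      \<and> W2sq (gauss \<mu> \<sigma>) q \<le> ennreal P}. D_marg R Rc (gauss \<mu> \<sigma>) q) \<le> D_perc R Rc P (gauss \<mu> \<sigma>)"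
  unfolding D_perc_def
proof (rule Inf_greatest, safe)
  fix D n M L enc dec q
  assume code: "is_code n M L enc dec" "ln (real M) / real n \<le> R" "ln (real L) / real n \<le> Rc"
    "avg_distortion (gauss \<mu> \<sigma>) n M L enc dec \<le> D" and q: "real_law q"
    and recon: "recon_iid (gauss \<mu> \<sigma>) n M L enc dec q"
    and perception: "ennreal (1 / real n) * (\<Sum>t<n. W2sq (gauss \<mu> \<sigma>) q) \<le> ennreal P"
  have W2: "W2sq (gauss \<mu> \<sigma>) q \<le> ennreal P"
    using perception code(1) by (subst (asm) ennreal_average_const) (auto simp: is_code_def)
  then have "W2sq (gauss \<mu> \<sigma>) q < \<top>" by (rule order.strict_trans1) simp
  then have q2: "integrable q (\<lambda>x. x\<^sup>2)"
    by (rule W2sq_finite_imp_integrable_square[OF integrable_gauss_square[OF \<sigma>] q])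
  have "W2sq (gauss \<mu> \<sigma>) (shrink_law \<mu> \<sigma> q) \<le> ennreal P"
    using W2sq_shrink_law_le[OF \<sigma> q q2] W2 by (rule order_trans)
  then show "(INF q \<in> {q. real_law q \<and> integrable q (\<lambda>x. x\<^sup>2) \<and> mean q = \<mu> \<and> std_dev q \<le> \<sigma>
      \<and> W2sq (gauss \<mu> \<sigma>) q \<le> ennreal P}. D_marg R Rc (gauss \<mu> \<sigma>) q) \<le> D"
    using real_law_shrink_law[OF \<sigma> q q2] integrable_shrink_law_square[OF \<sigma> q q2]
      mean_shrink_law[OF \<sigma> q q2] std_dev_shrink_law_le[OF \<sigma> q q2]
    by (intro INF_lower2[of "shrink_law \<mu> \<sigma> q"] D_marg_shrink_law_le[OF \<sigma> code q q2 recon]) auto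
qed

theorem lemma3:
  fixes \<mu> \<sigma> R Rc P :: real
  assumes "0 < \<sigma>" and "0 \<le> R" and "0 \<le> Rc" and "0 \<le> P"
  shows "D_perc R Rc P (gauss \<mu> \<sigma>) =
    (INF q \<in> {q. real_law q \<and> integrable q (\<lambda>x. x\<^sup>2) \<and> mean q = \<mu> \<and> std_dev q \<le> \<sigma>
                 \<and> W2sq (gauss \<mu> \<sigma>) q \<le> ennreal P}.
       D_marg R Rc (gauss \<mu> \<sigma>) q)"
  using assms(1) by (intro antisym D_perc_le_INF_D_marg INF_D_marg_le_D_perc_gauss)

end
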